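(* Let $\mathcal P$ and $\mathcal Q$ be two pairs of lines in the plane. If $\mathcal P$ consists of orthogonal lines, then rotating $\mathcal P$ by any angle about the crossing point of its lines does not change the rectangle locus of $\mathcal P$ and $\mathcal Q$.
   Context: A pair of lines means two distinct lines. The rectangle locus of two pairs $L_1,L_3$ and $L_2,L_4$ is the set of points $p$ in the plane that are the midpoint both of a segment joining $L_1$ and $L_3$ and of a segment joining $L_2$ and $L_4$, these two segments having equal length (equivalently, centers of possibly degenerate rectangles whose diagonals join the lines of the respective pairs). *)

theory Defs
  imports "HOL-Analysis.Analysis"
begin

definition is_line :: "complex set \<Rightarrow> bool" where
  "is_line L \<longleftrightarrow> (\<exists>a d. d \<noteq> 0 \<and> L = {a + of_real t * d | t. True})"

definition orthogonal_lines :: "complex set \<Rightarrow> complex set \<Rightarrow> bool" where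
  "orthogonal_lines L M \<longleftrightarrow>
     (\<forall>x\<in>L. \<forall>y\<in>L. \<forall>u\<in>M. \<forall>v\<in>M. (x - y) \<bullet> (u - v) = 0)"

definition rect_locus :: "complex set \<Rightarrow> complex set \<Rightarrow> complex set \<Rightarrow> complex set \<Rightarrow> complex set" where
  "rect_locus L1 L3 L2 L4 =
     {p. \<exists>x1\<in>L1. \<exists>x3\<in>L3. \<exists>x2\<in>L2. \<exists>x4\<in>L4.
           p = (x1 + x3) / 2 \<and> p = (x2 + x4) / 2 \<and> dist x1 x3 = dist x2 x4}"

definition rotate_about :: "complex \<Rightarrow> real \<Rightarrow> complex \<Rightarrow> complex" where
  "rotate_about c \<theta> z = c + cis \<theta> * (z - c)"

end

theory Submission
  imports Defs
begin

text \<open>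
  If \<open>L1\<close> and \<open>L3\<close> are orthogonal lines crossing at \<open>c\<close>, then by Thales' theorem the midpoint
  \<open>p\<close> of a segment \<open>x1 x3\<close> joining them lies at distance \<open>dist x1 x3 / 2\<close> from the right-angle
  vertex \<open>c\<close>, and every point of the plane is such a midpoint. Hence \<open>p\<close> belongs to the rectangle
  locus iff it is the midpoint of a segment joining \<open>L2\<close> and \<open>L4\<close> of length \<open>2 * dist p c\<close>.
  This description involves \<open>L1\<close>, \<open>L3\<close> only through \<open>c\<close>, and a rotation about \<open>c\<close> maps the pair
  to another pair of orthogonal lines crossing at \<open>c\<close>.
\<close>

lemma norm_diff_eq_norm_add_if_orthogonal:
  fixes a b :: "'a::real_inner"
  assumes "orthogonal a b"
  shows "norm (a - b) = norm (a + b)"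
proof -
  have "(norm (a - b))\<^sup>2 = (norm (a + b))\<^sup>2"
    using norm_add_Pythagorean[of a "- b"] norm_add_Pythagorean[OF assms] assms
    by (simp add: orthogonal_clauses)
  then show ?thesis
    by simp
qed

lemma inner_cis_mult [simp]: "(cis \<theta> * a) \<bullet> (cis \<theta> * b) = a \<bullet> b"
  by (simp add: inner_complex_def) (use sin_cos_squared_add[of \<theta>] in algebra)

lemma is_line_through:
  assumes "is_line L" and "c \<in> L"
  obtains d where "d \<noteq> 0" and "L = {c + of_real t * d | t. True}"
proof -
  obtain a d where "d \<noteq> 0" and L: "L = {a + of_real t * d | t. True}"
    using assms(1) unfolding is_line_def by blast
  moreover obtain t0 where "c = a + of_real t0 * d"
    using assms(2) L by blast
  then have "\<And>t. a + of_real t * d = c + of_real (t - t0) * d"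
    and "\<And>t. c + of_real t * d = a + of_real (t + t0) * d"
    by (simp_all add: algebra_simps)
  then have "{a + of_real t * d | t. True} = {c + of_real t * d | t. True}"
    by blast
  ultimately show ?thesis
    using that by blast
qed

lemma rotate_about_center [simp]: "rotate_about c \<theta> c = c"
  by (simp add: rotate_about_def)

lemma rotate_about_diff: "rotate_about c \<theta> x - rotate_about c \<theta> y = cis \<theta> * (x - y)"
  by (simp add: rotate_about_def algebra_simps)

lemma is_line_rotate_about:
  assumes "is_line L"
  shows "is_line (rotate_about c \<theta> ` L)"
proof -
  obtain a d where "d \<noteq> 0" and L: "L = {a + of_real t * d | t. True}"
    using assms unfolding is_line_def by blast
  have "rotate_about c \<theta> (a + of_real t * d) = rotate_about c \<theta> a + of_real t * (cis \<theta> * d)"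
    for t
    by (simp add: rotate_about_def algebra_simps)
  then have "rotate_about c \<theta> ` L = {rotate_about c \<theta> a + of_real t * (cis \<theta> * d) | t. True}"
    unfolding L by (simp add: full_SetCompr_eq image_image)
  with \<open>d \<noteq> 0\<close> show ?thesis
    unfolding is_line_def by (metis cis_neq_zero mult_eq_0_iff)
qed

lemma orthogonal_lines_rotate_about:
  assumes "orthogonal_lines L M"
  shows "orthogonal_lines (rotate_about c \<theta> ` L) (rotate_about c \<theta> ` M)"
  using assms unfolding orthogonal_lines_def by (auto simp: rotate_about_diff)

lemma orthogonal_lines_dist_midpoint:
  assumes "orthogonal_lines L M" and "c \<in> L" "c \<in> M" and "x \<in> L" "y \<in> M"
  shows "dist x y = 2 * dist ((x + y) / 2) c"
proof -
  have "orthogonal (x - c) (y - c)"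
    using assms unfolding orthogonal_lines_def orthogonal_def by blast
  then have "norm ((x - c) - (y - c)) = norm ((x - c) + (y - c))"
    by (rule norm_diff_eq_norm_add_if_orthogonal)
  also have "(x - c) + (y - c) = 2 * ((x + y) / 2 - c)"
    by (simp add: algebra_simps)
  finally have "norm (x - y) = norm (2 * ((x + y) / 2 - c))"
    by simp
  then show ?thesis
    unfolding dist_norm norm_mult by simp
qed

lemma orthogonal_lines_midpoint_exists:
  assumes "is_line L" "is_line M" and "orthogonal_lines L M" and "c \<in> L" "c \<in> M"
  shows "\<exists>x\<in>L. \<exists>y\<in>M. p = (x + y) / 2"
proof -
  obtain d where "d \<noteq> 0" and L: "L = {c + of_real t * d | t. True}"
    using is_line_through[OF assms(1,4)] by blast
  obtain e where "e \<noteq> 0" and M: "M = {c + of_real t * e | t. True}"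
    using is_line_through[OF assms(2,5)] by blast
  have "(c + of_real 1 * d - (c + of_real 0 * d)) \<bullet> (c + of_real 1 * e - (c + of_real 0 * e)) = 0"
    using assms(3) unfolding orthogonal_lines_def L M by blast
  then have "d \<bullet> e = 0"
    by simp
  define k where "k = Re (e / (\<i> * d))"
  have "e / (\<i> * d) \<in> \<real>"
    using \<open>d \<bullet> e = 0\<close> by (simp add: complex_is_Real_iff inner_complex_def Im_divide algebra_simps)
  then have "e / (\<i> * d) = of_real k"
    unfolding k_def by (simp add: of_real_Re)
  then have e: "e = of_real k * (\<i> * d)"
    using \<open>d \<noteq> 0\<close> by (simp add: divide_eq_eq)
  with \<open>e \<noteq> 0\<close> have "k \<noteq> 0"
    by auto
  define z where "z = 2 * (p - c) / d"
  have "p = ((c + of_real (Re z) * d) + (c + of_real (Im z / k) * e)) / 2"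
  proof -
    have "of_real (Im z / k) * e = of_real (Im z) * \<i> * d"
      using e \<open>k \<noteq> 0\<close> by simp
    moreover have "d * (of_real (Re z) + \<i> * of_real (Im z)) = 2 * (p - c)"
      using \<open>d \<noteq> 0\<close> by (simp add: z_def flip: complex_eq)
    ultimately show ?thesis
      by (simp add: algebra_simps)
  qed
  then show ?thesis
    unfolding L M by blast
qed

lemma rect_locus_orthogonal_lines:
  assumes "is_line L1" "is_line L3" and "orthogonal_lines L1 L3" and "c \<in> L1" "c \<in> L3"
  shows "rect_locus L1 L3 L2 L4
           = {p. \<exists>x2\<in>L2. \<exists>x4\<in>L4. p = (x2 + x4) / 2 \<and> dist x2 x4 = 2 * dist p c}"
proof (intro set_eqI iffI)
  fix p
  assume "p \<in> rect_locus L1 L3 L2 L4"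
  then obtain x1 x3 x2 x4 where "x1 \<in> L1" "x3 \<in> L3" "x2 \<in> L2" "x4 \<in> L4"
    and "p = (x1 + x3) / 2" "p = (x2 + x4) / 2" "dist x1 x3 = dist x2 x4"
    unfolding rect_locus_def by blast
  then show "p \<in> {p. \<exists>x2\<in>L2. \<exists>x4\<in>L4. p = (x2 + x4) / 2 \<and> dist x2 x4 = 2 * dist p c}"
    using orthogonal_lines_dist_midpoint[OF assms(3-5)] by fastforce
next
  fix p
  assume "p \<in> {p. \<exists>x2\<in>L2. \<exists>x4\<in>L4. p = (x2 + x4) / 2 \<and> dist x2 x4 = 2 * dist p c}"
  moreover obtain x1 x3 where "x1 \<in> L1" "x3 \<in> L3" "p = (x1 + x3) / 2"
    using orthogonal_lines_midpoint_exists[OF assms] by blast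
  ultimately show "p \<in> rect_locus L1 L3 L2 L4"
    using orthogonal_lines_dist_midpoint[OF assms(3-5)] unfolding rect_locus_def by fastforce
qed

theorem proposition5p1:
  fixes L1 L3 L2 L4 :: "complex set" and c :: complex and \<theta> :: real
  assumes "is_line L1" and "is_line L3" and "L1 \<noteq> L3"
    and "is_line L2" and "is_line L4" and "L2 \<noteq> L4"
    and "orthogonal_lines L1 L3"
    and "c \<in> L1" and "c \<in> L3"
  shows "rect_locus (rotate_about c \<theta> ` L1) (rotate_about c \<theta> ` L3) L2 L4
           = rect_locus L1 L3 L2 L4"
proof -
  let ?R = "rotate_about c \<theta>"
  have "c \<in> ?R ` L1" "c \<in> ?R ` L3"
    using \<open>c \<in> L1\<close> \<open>c \<in> L3\<close> rotate_about_center by (metis image_eqI)+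
  then show ?thesis
    using assms
    by (simp add: rect_locus_orthogonal_lines is_line_rotate_about orthogonal_lines_rotate_about)
qed

end
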